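(* Let $G=(V,E)$ be a block graph with $n=|V|\ge 2$ vertices, consisting of $r$ blocks whose numbers of vertices are $P_1,\dots,P_r$, and set $$\lambda_G=\sum_{i=1}^r \frac{P_i-1}{P_i}.$$ For a vertex $x\in V$ contained in exactly $s$ blocks, labeled $i_1,\dots,i_s$, set $$\beta_x=\Big(\sum_{j=1}^s \frac{1}{P_{i_j}}\Big)-(s-1).$$ Then the equation $DK=n\mathbf{1}_n$ has a unique solution $K$, and hence the Steinerberger curvature of every vertex $x\in V$ is $$K(x)=\frac{|V|\,\beta_x}{\lambda_G}.$$
   Context: All graphs are finite, simple, connected and undirected, with the combinatorial shortest-path distance $d$. For $G=(V,E)$ with $V=\{v_1,\dots,v_n\}$, let $D=(d(v_i,v_j))_{i,j=1}^n$ be its distance matrix and $\mathbf{1}_n\in\mathbb{R}^n$ the all-ones column vector. The Steinerberger curvature $K\in\mathbb{R}^n$ (written $K_i$ or $K(v_i)$) is defined as follows: if $DK=n\mathbf{1}_n$ has a unique solution, $K$ is that solution; if it has several solutions, $K$ is a solution for which $\min_i K_i$ is maximal; if it has no solution, $K=nD^\dagger\mathbf{1}_n$ with $D^\dagger$ the Moore–Penrose pseudoinverse. A block of a graph is a maximal connected subgraph without a cut vertex (maximal 2-connected subgraph; in particular a bridge together with its endpoints is a block). A block graph is a connected graph all of whose blocks are complete graphs (cliques). *)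

theory Defs
  imports "HOL-Analysis.Analysis" "HOL-Library.FuncSet"
begin

definition simple_graph :: "'a set \<Rightarrow> ('a \<Rightarrow> 'a \<Rightarrow> bool) \<Rightarrow> bool" where
  "simple_graph V E \<longleftrightarrow> finite V \<and> (\<forall>u v. E u v \<longrightarrow> E v u) \<and> (\<forall>u. \<not> E u u)
     \<and> (\<forall>u v. E u v \<longrightarrow> u \<in> V \<and> v \<in> V)"

fun walk :: "('a \<Rightarrow> 'a \<Rightarrow> bool) \<Rightarrow> 'a list \<Rightarrow> bool" where
  "walk E [] = False"
| "walk E [x] = True"
| "walk E (x # y # xs) = (E x y \<and> walk E (y # xs))"

definition conn_on :: "('a \<Rightarrow> 'a \<Rightarrow> bool) \<Rightarrow> 'a set \<Rightarrow> bool" where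
  "conn_on E S \<longleftrightarrow> (\<forall>u\<in>S. \<forall>v\<in>S. \<exists>xs. walk E xs \<and> hd xs = u \<and> last xs = v \<and> set xs \<subseteq> S)"

definition connected_graph :: "'a set \<Rightarrow> ('a \<Rightarrow> 'a \<Rightarrow> bool) \<Rightarrow> bool" where
  "connected_graph V E \<longleftrightarrow> simple_graph V E \<and> V \<noteq> {} \<and> conn_on E V"

definition gdist :: "('a \<Rightarrow> 'a \<Rightarrow> bool) \<Rightarrow> 'a \<Rightarrow> 'a \<Rightarrow> nat" where
  "gdist E u v = (LEAST k. \<exists>xs. walk E xs \<and> hd xs = u \<and> last xs = v \<and> length xs = Suc k)"

definition nocut_conn :: "('a \<Rightarrow> 'a \<Rightarrow> bool) \<Rightarrow> 'a set \<Rightarrow> bool" where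
  "nocut_conn E S \<longleftrightarrow> S \<noteq> {} \<and> conn_on E S \<and> (\<forall>x\<in>S. conn_on E (S - {x}))"

(* a block: maximal connected subgraph without a cut vertex (given by its vertex set;
   maximal such subgraphs are induced) *)
definition is_block :: "'a set \<Rightarrow> ('a \<Rightarrow> 'a \<Rightarrow> bool) \<Rightarrow> 'a set \<Rightarrow> bool" where
  "is_block V E B \<longleftrightarrow> B \<subseteq> V \<and> nocut_conn E B \<and>
     (\<forall>C. B \<subseteq> C \<and> C \<subseteq> V \<and> nocut_conn E C \<longrightarrow> C = B)"

definition blocks :: "'a set \<Rightarrow> ('a \<Rightarrow> 'a \<Rightarrow> bool) \<Rightarrow> 'a set set" where
  "blocks V E = {B. is_block V E B}"

definition block_graph :: "'a set \<Rightarrow> ('a \<Rightarrow> 'a \<Rightarrow> bool) \<Rightarrow> bool" where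
  "block_graph V E \<longleftrightarrow> connected_graph V E \<and>
     (\<forall>B \<in> blocks V E. \<forall>u\<in>B. \<forall>v\<in>B. u \<noteq> v \<longrightarrow> E u v)"

definition lambda_G :: "'a set \<Rightarrow> ('a \<Rightarrow> 'a \<Rightarrow> bool) \<Rightarrow> real" where
  "lambda_G V E = (\<Sum>B\<in>blocks V E. (real (card B) - 1) / real (card B))"

definition beta :: "'a set \<Rightarrow> ('a \<Rightarrow> 'a \<Rightarrow> bool) \<Rightarrow> 'a \<Rightarrow> real" where
  "beta V E x = (\<Sum>B\<in>{B\<in>blocks V E. x \<in> B}. 1 / real (card B))
                 - (real (card {B\<in>blocks V E. x \<in> B}) - 1)"

(* Matrices / vectors indexed by the vertex set V (functions, values outside V irrelevant) *)
definition dmat :: "('a \<Rightarrow> 'a \<Rightarrow> bool) \<Rightarrow> 'a \<Rightarrow> 'a \<Rightarrow> real" where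
  "dmat E u v = real (gdist E u v)"

definition mmult :: "'a set \<Rightarrow> ('a \<Rightarrow> 'a \<Rightarrow> real) \<Rightarrow> ('a \<Rightarrow> 'a \<Rightarrow> real) \<Rightarrow> 'a \<Rightarrow> 'a \<Rightarrow> real" where
  "mmult V A B = (\<lambda>u w. \<Sum>v\<in>V. A u v * B v w)"

definition mvec :: "'a set \<Rightarrow> ('a \<Rightarrow> 'a \<Rightarrow> real) \<Rightarrow> ('a \<Rightarrow> real) \<Rightarrow> 'a \<Rightarrow> real" where
  "mvec V A x = (\<lambda>u. \<Sum>v\<in>V. A u v * x v)"

definition meq :: "'a set \<Rightarrow> ('a \<Rightarrow> 'a \<Rightarrow> real) \<Rightarrow> ('a \<Rightarrow> 'a \<Rightarrow> real) \<Rightarrow> bool" where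
  "meq V A B \<longleftrightarrow> (\<forall>u\<in>V. \<forall>v\<in>V. A u v = B u v)"

(* Moore--Penrose pseudoinverse, characterised by the four Penrose equations *)
definition pinv :: "'a set \<Rightarrow> ('a \<Rightarrow> 'a \<Rightarrow> real) \<Rightarrow> 'a \<Rightarrow> 'a \<Rightarrow> real" where
  "pinv V A = (THE M. M \<in> V \<rightarrow>\<^sub>E V \<rightarrow>\<^sub>E UNIV \<and>
      meq V (mmult V (mmult V A M) A) A \<and> meq V (mmult V (mmult V M A) M) M \<and>
      meq V (mmult V A M) (\<lambda>u v. mmult V A M v u) \<and>
      meq V (mmult V M A) (\<lambda>u v. mmult V M A v u))"

definition curv_eq :: "'a set \<Rightarrow> ('a \<Rightarrow> 'a \<Rightarrow> bool) \<Rightarrow> ('a \<Rightarrow> real) \<Rightarrow> bool" where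
  "curv_eq V E K \<longleftrightarrow> (\<forall>u\<in>V. (\<Sum>v\<in>V. dmat E u v * K v) = real (card V))"

definition curv_solutions :: "'a set \<Rightarrow> ('a \<Rightarrow> 'a \<Rightarrow> bool) \<Rightarrow> ('a \<Rightarrow> real) set" where
  "curv_solutions V E = {K \<in> extensional V. curv_eq V E K}"

definition steinerberger_curvature :: "'a set \<Rightarrow> ('a \<Rightarrow> 'a \<Rightarrow> bool) \<Rightarrow> 'a \<Rightarrow> real" where
  "steinerberger_curvature V E =
     (if (\<exists>!K. K \<in> curv_solutions V E) then (THE K. K \<in> curv_solutions V E)
      else if curv_solutions V E \<noteq> {} then
        (SOME K. K \<in> curv_solutions V E \<and>
           (\<forall>K'\<in>curv_solutions V E. Min (K' ` V) \<le> Min (K ` V)))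
      else (\<lambda>u. real (card V) * mvec V (pinv V (dmat E)) (\<lambda>_. 1) u))"

end

theory Submission
  imports Defs
begin

text \<open>The gate of a block \<open>B\<close> seen from \<open>u\<close> is the vertex of \<open>B\<close> nearest to \<open>u\<close>. It is
  unique: two nearest vertices and shortest paths from them to \<open>u\<close> would give a walk leaving
  \<open>B\<close> and re-entering it elsewhere, contradicting the maximality of \<open>B\<close>. As \<open>B\<close> is a clique,
  all other vertices of \<open>B\<close> are one step further away. Consequently \<open>d(u,v)\<close> is the number of
  blocks whose gates from \<open>u\<close> and from \<open>v\<close> differ, and every \<open>v \<noteq> u\<close> lies in exactly one
  block whose gate from \<open>u\<close> is not \<open>v\<close>.

  The second fact evaluates \<open>\<Sum>\<^sub>v d(u,v) \<beta>\<^sub>v\<close> block by block as \<open>\<Sum>\<^sub>B (P\<^sub>B - 1)/P\<^sub>B = \<lambda>\<^sub>G\<close>,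
  so \<open>|V| \<beta> / \<lambda>\<^sub>G\<close> solves \<open>D K = |V| \<one>\<close>. The first gives
  \<open>x\<^sup>T D x = \<Sum>\<^sub>B ((\<Sum> x)\<^sup>2 - \<Sum>\<^sub>w m\<^sub>B(w)\<^sup>2)\<close>, where \<open>m\<^sub>B(w)\<close> is the mass of \<open>x\<close> on the vertices
  with gate \<open>w\<close> in \<open>B\<close>. If \<open>D x = 0\<close>, then \<open>\<lambda>\<^sub>G \<Sum> x = \<beta>\<^sup>T D x = 0\<close>, so all \<open>m\<^sub>B(w)\<close> vanish,
  and \<open>x\<^sub>v = \<Sum> x - \<Sum>\<^bsub>B \<ni> v\<^esub> (\<Sum> x - m\<^sub>B(v)) = 0\<close>; hence the solution is unique.\<close>

lemma walk_Cons: "walk E (x # xs) \<longleftrightarrow> xs = [] \<or> E x (hd xs) \<and> walk E xs"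
  by (cases xs) auto

lemma walk_nonempty: "walk E xs \<Longrightarrow> xs \<noteq> []"
  by (cases xs) auto

lemma walk_append:
  "xs \<noteq> [] \<Longrightarrow> ys \<noteq> [] \<Longrightarrow> walk E (xs @ ys) \<longleftrightarrow> walk E xs \<and> walk E ys \<and> E (last xs) (hd ys)"
  by (induction xs) (auto simp: walk_Cons)

lemma walk_snoc: "walk E xs \<Longrightarrow> E (last xs) v \<Longrightarrow> walk E (xs @ [v])"
  using walk_append[of xs "[v]" E] walk_nonempty[of E xs] by simp

lemma walk_rev:
  assumes "\<forall>u v. E u v \<longrightarrow> E v u" and "walk E xs"
  shows "walk E (rev xs)"
  using assms(2)
proof (induction xs)
  case (Cons x xs)
  show ?case
  proof (cases "xs = []")
    case False
    then have "walk E xs" "E x (hd xs)" using Cons.prems by (auto simp: walk_Cons)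
    then show ?thesis using False Cons.IH assms(1) by (simp add: walk_append last_rev hd_rev)
  qed simp
qed simp

definition reachable_in :: "('a \<Rightarrow> 'a \<Rightarrow> bool) \<Rightarrow> 'a set \<Rightarrow> 'a \<Rightarrow> 'a \<Rightarrow> bool" where
  "reachable_in E S u v \<longleftrightarrow> (\<exists>xs. walk E xs \<and> hd xs = u \<and> last xs = v \<and> set xs \<subseteq> S)"

lemma conn_on_iff_reachable_in: "conn_on E S \<longleftrightarrow> (\<forall>u\<in>S. \<forall>v\<in>S. reachable_in E S u v)"
  unfolding conn_on_def reachable_in_def by blast

lemma reachable_in_refl: "u \<in> S \<Longrightarrow> reachable_in E S u u"
  unfolding reachable_in_def by (intro exI[of _ "[u]"]) auto

lemma reachable_in_edge: "E u v \<Longrightarrow> u \<in> S \<Longrightarrow> v \<in> S \<Longrightarrow> reachable_in E S u v"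
  unfolding reachable_in_def by (intro exI[of _ "[u, v]"]) auto

lemma reachable_in_mono: "reachable_in E S u v \<Longrightarrow> S \<subseteq> T \<Longrightarrow> reachable_in E T u v"
  unfolding reachable_in_def by blast

lemma reachable_in_trans:
  assumes "reachable_in E S u v" and "reachable_in E S v w"
  shows "reachable_in E S u w"
proof -
  obtain xs where xs: "walk E xs" "hd xs = u" "last xs = v" "set xs \<subseteq> S"
    using assms(1) unfolding reachable_in_def by blast
  obtain y ys where ys: "walk E (y # ys)" "y = v" "last (y # ys) = w" "set (y # ys) \<subseteq> S"
    using assms(2) walk_nonempty unfolding reachable_in_def by (metis list.collapse list.sel(1))
  show ?thesis
  proof (cases "ys = []")
    case True
    then show ?thesis using xs ys unfolding reachable_in_def by auto
  next
    case False
    then have "walk E (xs @ ys)"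
      using xs ys walk_nonempty[OF xs(1)] by (simp add: walk_append walk_Cons)
    then show ?thesis
      using xs ys False walk_nonempty[OF xs(1)] unfolding reachable_in_def
      by (intro exI[of _ "xs @ ys"]) auto
  qed
qed

lemma reachable_in_sym:
  assumes "\<forall>u v. E u v \<longrightarrow> E v u" and "reachable_in E S u v"
  shows "reachable_in E S v u"
proof -
  obtain xs where "walk E xs" "hd xs = u" "last xs = v" "set xs \<subseteq> S"
    using assms(2) unfolding reachable_in_def by blast
  then show ?thesis
    using walk_rev[OF assms(1)] walk_nonempty unfolding reachable_in_def
    by (intro exI[of _ "rev xs"]) (auto simp: hd_rev last_rev)
qed

lemma reachable_in_from_hd: "walk E xs \<Longrightarrow> y \<in> set xs \<Longrightarrow> reachable_in E (set xs) (hd xs) y"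
proof (induction xs)
  case (Cons x xs)
  show ?case
  proof (cases "y = x")
    case False
    then have ne: "xs \<noteq> []" and w: "walk E xs" "E x (hd xs)"
      using Cons.prems by (auto simp: walk_Cons)
    have "reachable_in E (set (x # xs)) (hd xs) y"
      using Cons False w by (auto intro: reachable_in_mono)
    moreover have "reachable_in E (set (x # xs)) x (hd xs)"
      using w ne by (intro reachable_in_edge) auto
    ultimately show ?thesis by (auto intro: reachable_in_trans)
  qed (simp add: reachable_in_refl)
qed simp

lemma conn_on_walk_set:
  assumes "\<forall>u v. E u v \<longrightarrow> E v u" and "walk E xs"
  shows "conn_on E (set xs)"
  unfolding conn_on_iff_reachable_in
  using reachable_in_from_hd[OF assms(2)] reachable_in_sym[OF assms(1)] reachable_in_trans
  by metis

lemma conn_on_Un: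
  assumes "\<forall>u v. E u v \<longrightarrow> E v u" and "conn_on E S" "conn_on E T" "z \<in> S" "z \<in> T"
  shows "conn_on E (S \<union> T)"
proof -
  have from_z: "reachable_in E (S \<union> T) z w" if "w \<in> S \<union> T" for w
    using that assms(2-5) reachable_in_mono[of E S z w "S \<union> T"] reachable_in_mono[of E T z w "S \<union> T"]
    unfolding conn_on_iff_reachable_in by blast
  show ?thesis
    unfolding conn_on_iff_reachable_in
    using from_z reachable_in_sym[OF assms(1)] reachable_in_trans by metis
qed

lemma walk_shortcut:
  assumes "walk E (xs @ y # ys @ y # zs)"
  shows "walk E (xs @ y # zs)"
proof -
  have "walk E (xs @ [y])" and "walk E (y # zs)"
    using assms walk_append[of "xs @ [y]" "ys @ y # zs"] walk_append[of "xs @ y # ys" "y # zs"]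
    by auto
  then show ?thesis
    using walk_append[of "xs @ [y]" zs] by (cases zs) (auto simp: walk_Cons)
qed

lemma nocut_conn_edge:
  assumes "\<forall>u v. E u v \<longrightarrow> E v u" "E u v" "u \<noteq> v"
  shows "nocut_conn E {u, v}"
proof -
  have "conn_on E {u, v}" "conn_on E {w}" for w
    using conn_on_walk_set[OF assms(1), of "[u, v]"] conn_on_walk_set[OF assms(1), of "[w]"] assms(2)
    by simp_all
  then show ?thesis
    using assms(3) unfolding nocut_conn_def by (auto simp: insert_Diff_if)
qed

lemma conn_on_Un_walk:
  assumes "\<forall>u v. E u v \<longrightarrow> E v u" and "conn_on E S" "walk E xs" "z \<in> S" "z \<in> set xs"
  shows "conn_on E (S \<union> set xs)"
  using conn_on_Un[OF assms(1,2) conn_on_walk_set[OF assms(1,3)] assms(4,5)] .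

lemma nocut_conn_add_ear:
  assumes sym: "\<forall>u v. E u v \<longrightarrow> E v u"
    and B: "nocut_conn E B" and w: "walk E (a # ms @ [b])"
    and ab: "a \<in> B" "b \<in> B" "a \<noteq> b" and ms: "distinct ms" "set ms \<inter> B = {}"
  shows "nocut_conn E (B \<union> set ms)"
proof -
  have cB: "conn_on E B" "\<And>x. x \<in> B \<Longrightarrow> conn_on E (B - {x})"
    using B by (auto simp: nocut_conn_def)
  have "conn_on E (B \<union> set (a # ms @ [b]))"
    using conn_on_Un_walk[OF sym cB(1) w ab(1)] by simp
  moreover have "B \<union> set (a # ms @ [b]) = B \<union> set ms" using ab by auto
  ultimately have conn: "conn_on E (B \<union> set ms)" by simp
  have "conn_on E (B \<union> set ms - {x})" if x: "x \<in> B \<union> set ms" for x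
  proof (cases "x \<in> B")
    case xB: True
    show ?thesis
    proof (cases "x = a")
      case True
      have "walk E (ms @ [b])" using w by (auto simp: walk_Cons)
      from conn_on_Un_walk[OF sym cB(2)[OF xB] this, of b]
      have "conn_on E ((B - {x}) \<union> set (ms @ [b]))" using ab True by simp
      moreover have "(B - {x}) \<union> set (ms @ [b]) = B \<union> set ms - {x}" using True ab ms by auto
      ultimately show ?thesis by simp
    next
      case False
      have "walk E (a # ms)" using w walk_append[of "a # ms" "[b]"] by simp
      from conn_on_Un_walk[OF sym cB(2)[OF xB] this, of a]
      have "conn_on E ((B - {x}) \<union> set (a # ms))" using ab False by simp
      moreover have "(B - {x}) \<union> set (a # ms) = B \<union> set ms - {x}" using False xB ms ab by auto
      ultimately show ?thesis by simp
    qed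
  next
    case False
    then have "x \<in> set ms" using x by simp
    then obtain p q where msd: "ms = p @ x # q" by (meson split_list)
    have w1: "walk E (a # p)" and "walk E (x # q @ [b])"
      using w walk_append[of "a # p" "x # q @ [b]"] msd by auto
    then have w2: "walk E (q @ [b])" by (auto simp: walk_Cons)
    have "conn_on E (B \<union> set (a # p))" using conn_on_Un_walk[OF sym cB(1) w1 ab(1)] by simp
    from conn_on_Un_walk[OF sym this w2, of b]
    have "conn_on E ((B \<union> set (a # p)) \<union> set (q @ [b]))" using ab by simp
    moreover have "(B \<union> set (a # p)) \<union> set (q @ [b]) = B \<union> set ms - {x}"
      using False ms ab msd by auto
    ultimately show ?thesis by simp
  qed
  then show ?thesis using conn ab unfolding nocut_conn_def by auto
qed

lemma sum_if_eq_0: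
  fixes f :: "'a \<Rightarrow> 'b::ab_group_add"
  assumes "finite S" "a \<in> S"
  shows "(\<Sum>x\<in>S. if a = x then 0 else f x) = sum f S - f a"
proof -
  have "(\<Sum>x\<in>S. if a = x then 0 else f x) = (\<Sum>x\<in>S. f x - (if a = x then f x else 0))"
    by (rule sum.cong) auto
  also have "\<dots> = sum f S - f a" using assms by (simp add: sum_subtractf)
  finally show ?thesis .
qed

locale connected_simple_graph =
  fixes V :: "'a set" and E :: "'a \<Rightarrow> 'a \<Rightarrow> bool"
  assumes connected: "connected_graph V E"
begin

abbreviation d :: "'a \<Rightarrow> 'a \<Rightarrow> nat" where "d \<equiv> gdist E"

lemma finite_V: "finite V"
  and edge_sym: "\<forall>u v. E u v \<longrightarrow> E v u"
  and edge_irrefl: "\<not> E u u"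
  and edge_in_V: "E u v \<Longrightarrow> u \<in> V \<and> v \<in> V"
  and conn_on_V: "conn_on E V"
  using connected by (simp_all add: connected_graph_def simple_graph_def)

lemma walk_in_V: "walk E xs \<Longrightarrow> hd xs \<in> V \<Longrightarrow> set xs \<subseteq> V"
proof (induction xs)
  case (Cons x xs)
  then show ?case using edge_in_V by (cases "xs = []") (auto simp: walk_Cons)
qed simp

lemma dist_less_length: assumes "walk E xs" shows "d (hd xs) (last xs) < length xs"
proof -
  have ne: "xs \<noteq> []" using assms walk_nonempty by auto
  then have "d (hd xs) (last xs) \<le> length xs - 1"
    unfolding gdist_def using assms ne by (intro Least_le exI[of _ xs]) auto
  then show ?thesis using ne by (cases xs) auto
qed

lemma shortest_walk:
  assumes "u \<in> V" "v \<in> V"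
  obtains xs where "walk E xs" "hd xs = u" "last xs = v" "length xs = Suc (d u v)"
proof -
  obtain xs where xs: "walk E xs" "hd xs = u" "last xs = v"
    using conn_on_V assms unfolding conn_on_def by blast
  then have "\<exists>k xs. walk E xs \<and> hd xs = u \<and> last xs = v \<and> length xs = Suc k"
    using walk_nonempty[OF xs(1)] by (intro exI[of _ "length xs - 1"] exI[of _ xs]) auto
  then have "\<exists>xs. walk E xs \<and> hd xs = u \<and> last xs = v \<and> length xs = Suc (d u v)"
    unfolding gdist_def by (rule LeastI_ex)
  then show ?thesis using that by blast
qed

lemma dist_self [simp]: "d u u = 0"
  using dist_less_length[of "[u]"] by simp

lemma dist_eq_0_iff: assumes "u \<in> V" "v \<in> V" shows "d u v = 0 \<longleftrightarrow> u = v"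
proof
  assume "d u v = 0"
  then obtain xs where "walk E xs" "hd xs = u" "last xs = v" "length xs = Suc 0"
    using shortest_walk[OF assms] by metis
  then show "u = v" by (cases xs) auto
qed simp

lemma dist_sym: assumes "u \<in> V" "v \<in> V" shows "d u v = d v u"
proof -
  have "d v u \<le> d u v" if uv: "u \<in> V" "v \<in> V" for u v
  proof -
    obtain xs where xs: "walk E xs" "hd xs = u" "last xs = v" "length xs = Suc (d u v)"
      using shortest_walk[OF uv] by blast
    show ?thesis
      using dist_less_length[OF walk_rev[OF edge_sym xs(1)]] xs walk_nonempty[OF xs(1)]
      by (simp add: hd_rev last_rev)
  qed
  then show ?thesis using assms by (simp add: antisym)
qed

lemma dist_edge: "E u v \<Longrightarrow> d u v \<le> 1"
  using dist_less_length[of "[u, v]"] by simp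

lemma dist_triangle:
  assumes "u \<in> V" "v \<in> V" "w \<in> V"
  shows "d u w \<le> d u v + d v w"
proof -
  obtain xs where xs: "walk E xs" "hd xs = u" "last xs = v" "length xs = Suc (d u v)"
    using shortest_walk assms by blast
  obtain y ys where ys: "walk E (y # ys)" "y = v" "last (y # ys) = w" "length ys = d v w"
    using shortest_walk[OF assms(2,3)] by (metis length_Suc_conv list.sel(1))
  show ?thesis
  proof (cases "ys = []")
    case True
    then show ?thesis using xs ys dist_less_length[OF xs(1)] by simp
  next
    case False
    then have "walk E (xs @ ys)"
      using xs ys walk_nonempty[OF xs(1)] by (simp add: walk_append walk_Cons)
    from dist_less_length[OF this] show ?thesis
      using xs ys False walk_nonempty[OF xs(1)] by simp
  qed
qed

lemma dist_Suc_predecessor: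
  assumes "u \<in> V" "v \<in> V" "d u v = Suc k"
  obtains v' where "E v' v" "d u v' = k"
proof -
  obtain xs where xs: "walk E xs" "hd xs = u" "last xs = v" "length xs = Suc (d u v)"
    using shortest_walk assms by blast
  define ys where "ys = butlast xs"
  have ne: "ys \<noteq> []" using xs assms unfolding ys_def by (cases xs) auto
  have xsd: "xs = ys @ [v]"
    using xs unfolding ys_def by (metis append_butlast_last_id list.size(3) nat.distinct(1))
  have w: "walk E ys" and e: "E (last ys) v"
    using xs(1) walk_append[OF ne, of "[v]"] xsd by auto
  have "d u (last ys) < length ys"
    using dist_less_length[OF w] ne xs xsd by (metis hd_append2)
  then have "d u (last ys) \<le> k" using xs assms xsd by simp
  moreover have "d u v \<le> d u (last ys) + 1"
    using dist_triangle[of u "last ys" v] dist_edge[OF e] assms edge_in_V[OF e] by linarith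
  ultimately show ?thesis using that e assms by (metis add.commute add_le_cancel_left le_antisym plus_1_eq_Suc)
qed

lemma geodesic_to:
  assumes "v \<in> V" "a \<in> V"
  obtains p where "walk E (a # p)" "last (a # p) = v" "\<forall>x\<in>set p. d v x < d v a"
    "p = [] \<longleftrightarrow> v = a"
proof -
  obtain xs where xs: "walk E xs" "hd xs = v" "last xs = a" "length xs = Suc (d v a)"
    using shortest_walk assms by blast
  define p where "p = tl (rev xs)"
  have ne: "xs \<noteq> []" using walk_nonempty[OF xs(1)] .
  have rx: "rev xs = a # p"
    unfolding p_def using ne xs by (metis hd_rev list.collapse rev_is_Nil_conv)
  have "walk E (a # p)" using walk_rev[OF edge_sym xs(1)] rx by simp
  moreover have last: "last (a # p) = v" using rx xs ne by (metis last_rev)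
  moreover have "p = [] \<longleftrightarrow> v = a"
    using xs rx dist_eq_0_iff[OF assms] last by (metis length_Cons length_rev nat.inject length_0_conv)
  moreover have "d v x < d v a" if x: "x \<in> set p" for x
  proof -
    obtain q1 q2 where "rev p = q1 @ x # q2" using x by (metis set_rev split_list)
    then have xs2: "xs = (q1 @ [x]) @ (q2 @ [a])" using rx by (metis append_Cons append_assoc
        append_self_conv2 rev.simps(2) rev_rev_ident)
    then have "walk E (q1 @ [x])" using xs(1) walk_append[of "q1 @ [x]" "q2 @ [a]"] by simp
    moreover have "hd (q1 @ [x]) = v" using xs2 xs by (metis append_is_Nil_conv hd_append2 not_Cons_self2)
    ultimately have "d v x < length q1 + 1" using dist_less_length by fastforce
    then show ?thesis using xs xs2 by simp
  qed
  ultimately show ?thesis using that by blast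
qed

lemma walk_through:
  assumes "u \<in> V" "a \<in> V" "b \<in> V" "u \<noteq> a" "u \<noteq> b"
  obtains ms where "walk E (a # ms @ [b])" "u \<in> set ms"
    "\<forall>x\<in>set ms. d u x < d u a \<or> d u x < d u b"
proof -
  obtain p where p: "walk E (a # p)" "last (a # p) = u" "\<forall>x\<in>set p. d u x < d u a" "p \<noteq> []"
    using geodesic_to[OF assms(1,2)] assms(4) by metis
  obtain q where q: "walk E (b # q)" "last (b # q) = u" "\<forall>x\<in>set q. d u x < d u b" "q \<noteq> []"
    using geodesic_to[OF assms(1,3)] assms(5) by metis
  obtain q' where rq: "rev q = u # q'"
    using q(2,4) by (metis hd_rev last_ConsR list.collapse rev_is_Nil_conv)
  have "walk E (u # q' @ [b])" using walk_rev[OF edge_sym q(1)] rq by simp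
  then have "walk E ((a # p) @ (q' @ [b]))"
    using p walk_append[of "a # p" "q' @ [b]"] by (auto simp: walk_Cons)
  moreover have "u \<in> set p" using p(2,4) by (metis last_ConsR last_in_set)
  moreover have "set q' \<subseteq> set q" using rq by (metis set_rev set_subset_Cons)
  ultimately show ?thesis using that[of "p @ q'"] p(3) q(3) by auto
qed

lemma finite_blocks: "finite (blocks V E)"
proof -
  have "blocks V E \<subseteq> Pow V" by (auto simp: blocks_def is_block_def)
  then show ?thesis using finite_V finite_subset by blast
qed

lemma block_subset_V: "B \<in> blocks V E \<Longrightarrow> B \<subseteq> V"
  and block_nocut_conn: "B \<in> blocks V E \<Longrightarrow> nocut_conn E B"
  and block_maximal: "B \<in> blocks V E \<Longrightarrow> B \<subseteq> C \<Longrightarrow> C \<subseteq> V \<Longrightarrow> nocut_conn E C \<Longrightarrow> C = B"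
  by (auto simp: blocks_def is_block_def)

lemma finite_block: "B \<in> blocks V E \<Longrightarrow> finite B"
  using block_subset_V finite_V finite_subset by blast

lemma block_nonempty: "B \<in> blocks V E \<Longrightarrow> B \<noteq> {}"
  using block_nocut_conn nocut_conn_def by blast

text \<open>After shortcutting repeated vertices, such a walk would enlarge \<open>B\<close> to a bigger set
  without cut vertex (\<open>nocut_conn_add_ear\<close>), contradicting maximality.\<close>

lemma block_no_detour:
  assumes B: "B \<in> blocks V E" and "walk E (a # ms @ [b])" and ab: "a \<in> B" "b \<in> B" "a \<noteq> b"
    and "ms \<noteq> []" "set ms \<inter> B = {}"
  shows False
  using assms(2,6,7)
proof (induction "length ms" arbitrary: ms rule: less_induct)
  case less
  show False
  proof (cases "distinct ms")
    case False
    then obtain xs ys zs y where msd: "ms = xs @ [y] @ ys @ [y] @ zs"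
      using not_distinct_decomp by blast
    have "walk E ((a # xs) @ y # zs @ [b])"
      using walk_shortcut[of E "a # xs" y ys "zs @ [b]"] less.prems(1) msd by simp
    then have "walk E (a # (xs @ [y] @ zs) @ [b])" by simp
    then show False by (rule less.hyps[rotated]) (use less.prems msd in auto)
  next
    case True
    have "B \<union> set ms \<subseteq> V"
      using walk_in_V[OF less.prems(1)] block_subset_V[OF B] ab by auto
    then have "B \<union> set ms = B"
      using nocut_conn_add_ear[OF edge_sym block_nocut_conn[OF B] less.prems(1) ab True
          less.prems(3)] block_maximal[OF B] by blast
    then show False using less.prems(2,3) by (cases ms) auto
  qed
qed

lemma edge_in_block:
  assumes "E u v"
  obtains B where "B \<in> blocks V E" "u \<in> B" "v \<in> B"
proof -
  define M where "M = {C. {u, v} \<subseteq> C \<and> C \<subseteq> V \<and> nocut_conn E C}"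
  have "finite M" using finite_V unfolding M_def by (auto intro: finite_subset[of _ "Pow V"])
  moreover have "{u, v} \<in> M"
    using nocut_conn_edge[OF edge_sym assms] edge_irrefl edge_in_V[OF assms] assms
    unfolding M_def by auto
  ultimately obtain B where "B \<in> M" "\<forall>C\<in>M. B \<subseteq> C \<longrightarrow> B = C"
    using finite_has_maximal[of M] by blast
  then have "B \<in> blocks V E" "u \<in> B" "v \<in> B"
    unfolding M_def blocks_def is_block_def by auto
  then show ?thesis using that by blast
qed

text \<open>The nearest vertex is unique (\<open>nearest_eq_gate\<close>), so the choice made by
  \<open>arg_min_on\<close> is immaterial.\<close>

definition gate :: "'a set \<Rightarrow> 'a \<Rightarrow> 'a" where
  "gate B u = arg_min_on (d u) B"

lemma gate_in_block: "B \<in> blocks V E \<Longrightarrow> gate B u \<in> B"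
  unfolding gate_def by (rule arg_min_if_finite(1)[OF finite_block block_nonempty])

lemma gate_in_V: "B \<in> blocks V E \<Longrightarrow> gate B u \<in> V"
  using gate_in_block block_subset_V by blast

lemma gate_nearest: "B \<in> blocks V E \<Longrightarrow> c \<in> B \<Longrightarrow> d u (gate B u) \<le> d u c"
  unfolding gate_def by (rule arg_min_least[OF finite_block block_nonempty])

lemma nearest_eq_gate:
  assumes B: "B \<in> blocks V E" and u: "u \<in> V"
    and a: "a \<in> B" "\<forall>c\<in>B. d u a \<le> d u c"
  shows "a = gate B u"
proof (rule ccontr)
  define b where "b = gate B u"
  assume ab: "a \<noteq> b"
  have b: "b \<in> B" "\<forall>c\<in>B. d u b \<le> d u c"
    unfolding b_def using gate_in_block[OF B] gate_nearest[OF B] by auto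
  have eq: "d u a = d u b" using a b by (simp add: antisym)
  have abV: "a \<in> V" "b \<in> V" using a b block_subset_V[OF B] by auto
  then have "u \<noteq> a" and "u \<noteq> b" using eq ab dist_eq_0_iff[OF u] by auto
  then obtain ms where ms: "walk E (a # ms @ [b])" "u \<in> set ms"
    "\<forall>x\<in>set ms. d u x < d u a \<or> d u x < d u b"
    using walk_through[OF u abV] \<open>u \<noteq> a\<close> \<open>u \<noteq> b\<close> by blast
  moreover have "set ms \<inter> B = {}" using ms(3) a(2) eq by fastforce
  moreover have "ms \<noteq> []" using ms(2) by auto
  ultimately show False using block_no_detour[OF B _ a(1) b(1) ab] by blast
qed

lemma gate_self: "B \<in> blocks V E \<Longrightarrow> u \<in> B \<Longrightarrow> gate B u = u"
  using nearest_eq_gate[of B u u] block_subset_V[of B] by auto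

lemma gate_edge:
  assumes B: "B \<in> blocks V E" and e: "E v v'" and not_in: "\<not> (v \<in> B \<and> v' \<in> B)"
  shows "gate B v = gate B v'"
proof (rule ccontr)
  define a b where "a = gate B v" and "b = gate B v'"
  assume "gate B v \<noteq> gate B v'"
  then have ab: "a \<noteq> b" unfolding a_def b_def .
  have a: "a \<in> B" "\<forall>c\<in>B. d v a \<le> d v c" and b: "b \<in> B" "\<forall>c\<in>B. d v' b \<le> d v' c"
    unfolding a_def b_def using gate_in_block[OF B] gate_nearest[OF B] by auto
  have abV: "a \<in> V" "b \<in> V" using a b block_subset_V[OF B] by auto
  obtain p where p: "walk E (a # p)" "last (a # p) = v" "\<forall>x\<in>set p. d v x < d v a"
    "p = [] \<longleftrightarrow> v = a"
    using geodesic_to[of v a] edge_in_V[OF e] abV by blast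
  obtain q where q: "walk E (b # q)" "last (b # q) = v'" "\<forall>x\<in>set q. d v' x < d v' b"
    "q = [] \<longleftrightarrow> v' = b"
    using geodesic_to[of v' b] edge_in_V[OF e] abV by blast
  have "walk E (rev (b # q))" "hd (rev (b # q)) = v'"
    using walk_rev[OF edge_sym q(1)] q(2) by (auto simp: hd_rev)
  then have "walk E ((a # p) @ rev (b # q))"
    using walk_append[of "a # p" "rev (b # q)"] p e by simp
  then have w: "walk E (a # (p @ rev q) @ [b])" by simp
  have "set (p @ rev q) \<inter> B = {}" using p(3) q(3) a(2) b(2) by fastforce
  moreover have "p @ rev q \<noteq> []" using p(4) q(4) a(1) b(1) not_in by auto
  ultimately show False using block_no_detour[OF B w a(1) b(1) ab] by blast
qed

end

locale clique_block_graph = connected_simple_graph +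
  assumes block_clique: "B \<in> blocks V E \<Longrightarrow> u \<in> B \<Longrightarrow> v \<in> B \<Longrightarrow> u \<noteq> v \<Longrightarrow> E u v"
begin

lemma blocks_eq_if_two_common:
  assumes B1: "B1 \<in> blocks V E" and B2: "B2 \<in> blocks V E"
    and "x \<in> B1" "x \<in> B2" "y \<in> B1" "y \<in> B2" "x \<noteq> y"
  shows "B1 = B2"
proof (rule ccontr)
  assume "B1 \<noteq> B2"
  then have "\<not> B2 \<subseteq> B1"
    using block_maximal[OF B2, of B1] block_subset_V[OF B1] block_nocut_conn[OF B1] by auto
  then obtain c where c: "c \<in> B2" "c \<notin> B1" by auto
  have "walk E (x # [c] @ [y])" using block_clique[OF B2] assms c by auto
  then show False using block_no_detour[OF B1 _ assms(3,5,7), of "[c]"] c by auto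
qed

lemma dist_gate:
  assumes B: "B \<in> blocks V E" and u: "u \<in> V" and w: "w \<in> B" "w \<noteq> gate B u"
  shows "d u w = d u (gate B u) + 1"
proof -
  have "E (gate B u) w" using block_clique[OF B gate_in_block[OF B] w(1)] w(2) by auto
  then have "d u w \<le> d u (gate B u) + 1"
    using dist_triangle[OF u gate_in_V[OF B, of u], of w] dist_edge block_subset_V[OF B] w(1)
    by fastforce
  moreover have "d u w \<noteq> d u (gate B u)"
  proof
    assume "d u w = d u (gate B u)"
    then have "\<forall>c\<in>B. d u w \<le> d u c" using gate_nearest[OF B] by simp
    then show False using nearest_eq_gate[OF B u w(1)] w(2) by simp
  qed
  moreover have "d u (gate B u) \<le> d u w" using gate_nearest[OF B w(1)] .
  ultimately show ?thesis by simp
qed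

lemma gate_eq_if_closer:
  assumes B: "B \<in> blocks V E" and u: "u \<in> V" and "v \<in> B" "v' \<in> B" "d u v' < d u v"
  shows "gate B u = v'"
proof (rule ccontr)
  assume "gate B u \<noteq> v'"
  then have "d u v' = d u (gate B u) + 1" using dist_gate[OF B u \<open>v' \<in> B\<close>] by simp
  moreover have "d u v \<le> d u (gate B u) + 1"
    using dist_gate[OF B u \<open>v \<in> B\<close>] by (cases "v = gate B u") simp_all
  ultimately show False using \<open>d u v' < d u v\<close> by simp
qed

lemma gate_eq_if_edge_in_other_block:
  assumes C: "C \<in> blocks V E" and B: "B \<in> blocks V E" "C \<noteq> B"
    and e: "E v v'" and "v \<in> B" "v' \<in> B"
  shows "gate C v = gate C v'"
proof -
  have "v \<noteq> v'" using e edge_irrefl by auto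
  then have "\<not> (v \<in> C \<and> v' \<in> C)"
    using blocks_eq_if_two_common[OF C B(1)] assms(5,6) B(2) by blast
  then show ?thesis using gate_edge[OF C e] by blast
qed

text \<open>Every vertex \<open>v \<noteq> u\<close> lies in exactly one block whose gate from \<open>u\<close> is not \<open>v\<close>
  itself: the block containing the last edge of a shortest path from \<open>u\<close> to \<open>v\<close>.\<close>

lemma entry_block_exists:
  assumes u: "u \<in> V" and v: "v \<in> V" and "u \<noteq> v"
  obtains B where "B \<in> blocks V E" "v \<in> B" "gate B u \<noteq> v"
proof -
  obtain k where k: "d u v = Suc k"
    using dist_eq_0_iff[OF u v] assms(3) not0_implies_Suc by blast
  obtain v' where v': "E v' v" "d u v' = k" using dist_Suc_predecessor[OF u v k] by blast
  obtain B where B: "B \<in> blocks V E" "v' \<in> B" "v \<in> B" using edge_in_block[OF v'(1)] by blast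
  have "gate B u = v'" using gate_eq_if_closer[OF B(1) u B(3,2)] k v'(2) by simp
  then show ?thesis using that B v'(1) edge_irrefl by auto
qed

lemma entry_block_unique:
  assumes u: "u \<in> V" and B1: "B1 \<in> blocks V E" and B2: "B2 \<in> blocks V E"
    and v: "v \<in> B1" "v \<in> B2" and g: "gate B1 u \<noteq> v" "gate B2 u \<noteq> v"
  shows "B1 = B2"
proof (rule ccontr)
  assume ne: "B1 \<noteq> B2"
  define a1 a2 where "a1 = gate B1 u" and "a2 = gate B2 u"
  have a1: "a1 \<in> B1" "\<forall>c\<in>B1. d u a1 \<le> d u c" and a2: "a2 \<in> B2" "\<forall>c\<in>B2. d u a2 \<le> d u c"
    unfolding a1_def a2_def using gate_in_block gate_nearest B1 B2 by auto
  have aV: "a1 \<in> V" "a2 \<in> V" using a1(1) a2(1) block_subset_V B1 B2 by auto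
  have "d u v = d u a1 + 1" using dist_gate[OF B1 u v(1)] g(1) unfolding a1_def by auto
  moreover have "d u v = d u a2 + 1" using dist_gate[OF B2 u v(2)] g(2) unfolding a2_def by auto
  ultimately have eq: "d u a1 = d u a2" by simp
  have a2_notin: "a2 \<notin> B1"
  proof
    assume "a2 \<in> B1"
    moreover have "\<forall>c\<in>B1. d u a2 \<le> d u c" using a1(2) eq by simp
    ultimately have "a2 = a1" using nearest_eq_gate[OF B1 u] unfolding a1_def by blast
    then have "B1 = B2" using blocks_eq_if_two_common[OF B1 B2 a1(1) _ v] a2(1) g(1)
      unfolding a1_def by simp
    with ne show False ..
  qed
  have "a1 \<noteq> a2" using a1(1) a2_notin by auto
  have "\<not> (u = a1 \<or> u = a2)"
  proof
    assume "u = a1 \<or> u = a2"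
    then have "d u a1 = 0" "d u a2 = 0" using eq by auto
    then show False using dist_eq_0_iff[OF u aV(1)] dist_eq_0_iff[OF u aV(2)] \<open>a1 \<noteq> a2\<close> by simp
  qed
  then have ua: "u \<noteq> a1" "u \<noteq> a2" by simp_all
  obtain ms where ms: "walk E (a1 # ms @ [a2])" "u \<in> set ms"
    "\<forall>x\<in>set ms. d u x < d u a1 \<or> d u x < d u a2"
    by (rule walk_through[OF u aV ua])
  have "E a2 v" using block_clique[OF B2 a2(1) v(2)] g(2) unfolding a2_def by auto
  then have "walk E ((a1 # ms @ [a2]) @ [v])" by (intro walk_snoc[OF ms(1)]) simp
  then have w: "walk E (a1 # (ms @ [a2]) @ [v])" by simp
  have disj: "set (ms @ [a2]) \<inter> B1 = {}"
  proof -
    have "d u x < d u a1" if "x \<in> set ms" for x using ms(3) eq that by auto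
    then show ?thesis using a1(2) a2_notin by (auto dest: leD)
  qed
  have "a1 \<noteq> v" using g(1) unfolding a1_def .
  show False using block_no_detour[OF B1 w a1(1) v(1) \<open>a1 \<noteq> v\<close> _ disj] by simp
qed

lemma card_entry_blocks:
  assumes "u \<in> V" "v \<in> V"
  shows "card {B \<in> blocks V E. v \<in> B \<and> gate B u \<noteq> v} = (if u = v then 0 else 1)"
proof (cases "u = v")
  case True
  have "{B \<in> blocks V E. v \<in> B \<and> gate B u \<noteq> v} = {}" using True gate_self by blast
  then have "card {B \<in> blocks V E. v \<in> B \<and> gate B u \<noteq> v} = 0" by (simp only: card.empty)
  then show ?thesis using True by simp
next
  case False
  then obtain B where B: "B \<in> blocks V E" "v \<in> B" "gate B u \<noteq> v"
    using entry_block_exists assms by blast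
  then have "{B \<in> blocks V E. v \<in> B \<and> gate B u \<noteq> v} = {B}"
    using entry_block_unique[OF assms(1) _ B(1) _ B(2) _ B(3)] by blast
  then show ?thesis using False by simp
qed

lemma sum_entry_blocks:
  fixes c :: real
  assumes "u \<in> V" "v \<in> V"
  shows "(\<Sum>B\<in>blocks V E. if v \<in> B \<and> gate B u \<noteq> v then c else 0) = (if u = v then 0 else c)"
  using card_entry_blocks[OF assms] finite_blocks
  by (simp add: sum.If_cases Int_def split: if_splits)

lemma dist_eq_card_separating_blocks:
  assumes u: "u \<in> V" and v: "v \<in> V"
  shows "d u v = card {B \<in> blocks V E. gate B u \<noteq> gate B v}"
  using v
proof (induction "d u v" arbitrary: v)
  case 0
  then show ?case using dist_eq_0_iff[OF u] by auto
next
  case (Suc k)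
  obtain v' where v': "E v' v" "d u v' = k"
    using dist_Suc_predecessor[OF u Suc.prems Suc.hyps(2)[symmetric]] by blast
  obtain B0 where B0: "B0 \<in> blocks V E" "v' \<in> B0" "v \<in> B0" using edge_in_block[OF v'(1)] by blast
  have vv': "v \<noteq> v'" using v'(1) edge_irrefl by auto
  have gate_B0: "gate B0 u = v'"
    using gate_eq_if_closer[OF B0(1) u B0(3,2)] Suc.hyps(2) v'(2) by simp
  have others: "gate C v = gate C v'" if "C \<in> blocks V E" "C \<noteq> B0" for C
    using gate_eq_if_edge_in_other_block[OF that(1) B0(1) that(2) edge_sym[rule_format, OF v'(1)]
        B0(3,2)] .
  have "{B \<in> blocks V E. gate B u \<noteq> gate B v} = insert B0 {B \<in> blocks V E. gate B u \<noteq> gate B v'}"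
  proof (rule set_eqI)
    fix C
    show "C \<in> {B \<in> blocks V E. gate B u \<noteq> gate B v} \<longleftrightarrow>
        C \<in> insert B0 {B \<in> blocks V E. gate B u \<noteq> gate B v'}"
      using others[of C] B0(1) gate_B0 gate_self[OF B0(1) B0(3)] vv' by (cases "C = B0") auto
  qed
  moreover have "B0 \<notin> {B \<in> blocks V E. gate B u \<noteq> gate B v'}"
    using gate_B0 gate_self[OF B0(1) B0(2)] by simp
  moreover have "k = card {B \<in> blocks V E. gate B u \<noteq> gate B v'}"
    using Suc.hyps(1)[of v'] v'(2) edge_in_V[OF v'(1)] by simp
  ultimately show ?case using Suc.hyps(2) finite_blocks by simp
qed

lemma sum_V_by_entry_blocks:
  fixes f :: "'a \<Rightarrow> real"
  assumes u: "u \<in> V"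
  shows "(\<Sum>v\<in>V. f v) = f u + (\<Sum>B\<in>blocks V E. \<Sum>v\<in>B - {gate B u}. f v)"
proof -
  have "(\<Sum>B\<in>blocks V E. \<Sum>v\<in>B - {gate B u}. f v)
      = (\<Sum>B\<in>blocks V E. \<Sum>v\<in>V. if v \<in> B \<and> gate B u \<noteq> v then f v else 0)"
  proof (rule sum.cong[OF refl])
    fix B assume "B \<in> blocks V E"
    then have "B - {gate B u} = {v \<in> V. v \<in> B \<and> gate B u \<noteq> v}" using block_subset_V by auto
    then show "(\<Sum>v\<in>B - {gate B u}. f v) = (\<Sum>v\<in>V. if v \<in> B \<and> gate B u \<noteq> v then f v else 0)"
      using finite_V by (simp add: sum.inter_filter)
  qed
  also have "\<dots> = (\<Sum>v\<in>V. \<Sum>B\<in>blocks V E. if v \<in> B \<and> gate B u \<noteq> v then f v else 0)"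
    by (rule sum.swap)
  also have "\<dots> = (\<Sum>v\<in>V. if u = v then 0 else f v)"
    using sum_entry_blocks[OF u] by (intro sum.cong) auto
  also have "\<dots> = (\<Sum>v\<in>V. f v) - f u" by (rule sum_if_eq_0[OF finite_V u])
  finally show ?thesis by simp
qed

lemma sum_V_by_blocks_containing:
  fixes x :: "'a \<Rightarrow> real"
  assumes v: "v \<in> V"
  shows "(\<Sum>u\<in>V. x u) = x v + (\<Sum>B\<in>{B \<in> blocks V E. v \<in> B}. \<Sum>u\<in>{u \<in> V. gate B u \<noteq> v}. x u)"
proof -
  have "(\<Sum>B\<in>{B \<in> blocks V E. v \<in> B}. \<Sum>u\<in>{u \<in> V. gate B u \<noteq> v}. x u)
      = (\<Sum>B\<in>blocks V E. if v \<in> B then \<Sum>u\<in>{u \<in> V. gate B u \<noteq> v}. x u else 0)"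
    by (rule sum.inter_filter[OF finite_blocks])
  also have "\<dots> = (\<Sum>B\<in>blocks V E. \<Sum>u\<in>V. if v \<in> B \<and> gate B u \<noteq> v then x u else 0)"
    by (intro sum.cong refl) (simp add: sum.inter_filter[OF finite_V])
  also have "\<dots> = (\<Sum>u\<in>V. \<Sum>B\<in>blocks V E. if v \<in> B \<and> gate B u \<noteq> v then x u else 0)"
    by (rule sum.swap)
  also have "\<dots> = (\<Sum>u\<in>V. if u = v then 0 else x u)"
    using sum_entry_blocks[OF _ v] by (intro sum.cong) auto
  also have "\<dots> = (\<Sum>u\<in>V. x u) - x v"
    using sum_if_eq_0[OF finite_V v, of x] by (simp add: eq_commute)
  finally show ?thesis by simp
qed

lemma sum_dist_block_minus_gate:
  assumes B: "B \<in> blocks V E" and u: "u \<in> V"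
  shows "(\<Sum>v\<in>B - {gate B u}. real (d u v)) = (real (card B) - 1) * (real (d u (gate B u)) + 1)"
proof -
  have "(\<Sum>v\<in>B - {gate B u}. real (d u v)) = (\<Sum>v\<in>B - {gate B u}. real (d u (gate B u)) + 1)"
    using dist_gate[OF B u] by (intro sum.cong) auto
  also have "\<dots> = (real (card B) - 1) * (real (d u (gate B u)) + 1)"
  proof -
    have "card B \<ge> 1"
      using finite_block[OF B] gate_in_block[OF B, of u] by (auto simp: Suc_le_eq card_gt_0_iff)
    then show ?thesis
      using finite_block[OF B] gate_in_block[OF B, of u] by (simp add: card_Diff_singleton of_nat_diff)
  qed
  finally show ?thesis .
qed

lemma beta_eq: "beta V E v = 1 - (\<Sum>B\<in>{B \<in> blocks V E. v \<in> B}. 1 - 1 / real (card B))"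
  unfolding beta_def by (simp add: sum_subtractf)

lemma sum_dist_block:
  assumes B: "B \<in> blocks V E" and u: "u \<in> V"
  shows "(\<Sum>v\<in>B. real (d u v)) = real (card B) * real (d u (gate B u)) + (real (card B) - 1)"
  using sum.remove[OF finite_block[OF B] gate_in_block[OF B, of u], of "\<lambda>v. real (d u v)"]
    sum_dist_block_minus_gate[OF B u] by (simp add: algebra_simps)

lemma sum_V_times_blocks_containing:
  fixes f c :: "_ \<Rightarrow> real"
  shows "(\<Sum>v\<in>V. f v * (\<Sum>B\<in>{B \<in> blocks V E. v \<in> B}. c B)) = (\<Sum>B\<in>blocks V E. c B * (\<Sum>v\<in>B. f v))"
proof -
  have "(\<Sum>v\<in>V. f v * (\<Sum>B\<in>{B \<in> blocks V E. v \<in> B}. c B))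
      = (\<Sum>B\<in>blocks V E. \<Sum>v\<in>{v \<in> V. v \<in> B}. c B * f v)"
    by (simp add: sum_distrib_left mult.commute sum.swap_restrict[OF finite_V finite_blocks])
  also have "\<dots> = (\<Sum>B\<in>blocks V E. c B * (\<Sum>v\<in>B. f v))"
  proof (rule sum.cong[OF refl])
    fix B assume "B \<in> blocks V E"
    then have "{v \<in> V. v \<in> B} = B" using block_subset_V by auto
    then show "(\<Sum>v\<in>{v \<in> V. v \<in> B}. c B * f v) = c B * (\<Sum>v\<in>B. f v)"
      by (simp add: sum_distrib_left)
  qed
  finally show ?thesis .
qed

lemma sum_dist_beta:
  assumes u: "u \<in> V"
  shows "(\<Sum>v\<in>V. real (d u v) * beta V E v) = lambda_G V E"
proof -
  define m where "m B = real (card B)" for B :: "'a set"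
  define \<delta> where "\<delta> B = real (d u (gate B u))" for B
  have total: "(\<Sum>v\<in>V. real (d u v)) = (\<Sum>B\<in>blocks V E. (m B - 1) * (\<delta> B + 1))"
    using sum_V_by_entry_blocks[OF u, of "\<lambda>v. real (d u v)"] sum_dist_block_minus_gate[OF _ u]
    by (simp add: m_def \<delta>_def)
  have weighted: "(\<Sum>v\<in>V. real (d u v) * (\<Sum>B\<in>{B \<in> blocks V E. v \<in> B}. 1 - 1 / m B))
      = (\<Sum>B\<in>blocks V E. (1 - 1 / m B) * (m B * \<delta> B + (m B - 1)))"
    unfolding sum_V_times_blocks_containing using sum_dist_block[OF _ u] by (simp add: m_def \<delta>_def)
  have "(\<Sum>v\<in>V. real (d u v) * beta V E v)
      = (\<Sum>v\<in>V. real (d u v)) - (\<Sum>v\<in>V. real (d u v) * (\<Sum>B\<in>{B \<in> blocks V E. v \<in> B}. 1 - 1 / m B))"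
    unfolding beta_eq m_def by (simp add: right_diff_distrib sum_subtractf)
  also have "\<dots> = (\<Sum>B\<in>blocks V E. (m B - 1) * (\<delta> B + 1) - (1 - 1 / m B) * (m B * \<delta> B + (m B - 1)))"
    unfolding total weighted by (rule sum_subtractf[symmetric])
  also have "\<dots> = (\<Sum>B\<in>blocks V E. (m B - 1) / m B)"
  proof (rule sum.cong[OF refl])
    fix B assume B: "B \<in> blocks V E"
    have "m B > 0"
      unfolding m_def using finite_block[OF B] block_nonempty[OF B] by (simp add: card_gt_0_iff)
    then show "(m B - 1) * (\<delta> B + 1) - (1 - 1 / m B) * (m B * \<delta> B + (m B - 1)) = (m B - 1) / m B"
      by (simp add: field_simps)
  qed
  finally show ?thesis unfolding lambda_G_def m_def .
qed

lemma lambda_G_pos: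
  assumes "card V \<ge> 2"
  shows "lambda_G V E > 0"
proof -
  obtain u where u: "u \<in> V" using assms by fastforce
  have "card (V - {u}) \<ge> 1" using assms u finite_V by (simp add: card_Diff_singleton)
  then have "V - {u} \<noteq> {}" by (metis card.empty not_one_le_zero)
  then obtain v where v: "v \<in> V" "v \<noteq> u" by blast
  then obtain B0 where B0: "B0 \<in> blocks V E" "v \<in> B0" "gate B0 u \<noteq> v"
    using entry_block_exists[OF u] by metis
  have "card {gate B0 u, v} \<le> card B0"
    using B0 finite_block[OF B0(1)] gate_in_block[OF B0(1)] by (intro card_mono) auto
  then have "card B0 \<ge> 2" using B0(3) by simp
  then have "(real (card B0) - 1) / real (card B0) > 0" by simp
  moreover have "(real (card B) - 1) / real (card B) \<ge> 0" if "B \<in> blocks V E" for B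
    using finite_block[OF that] block_nonempty[OF that] by (simp add: card_gt_0_iff Suc_le_eq)
  ultimately show ?thesis
    unfolding lambda_G_def using finite_blocks B0(1) by (intro sum_pos2) auto
qed

definition gate_mass :: "('a \<Rightarrow> real) \<Rightarrow> 'a set \<Rightarrow> 'a \<Rightarrow> real" where
  "gate_mass x B w = (\<Sum>u\<in>{u \<in> V. gate B u = w}. x u)"

lemma sum_gate_mass_square:
  assumes B: "B \<in> blocks V E"
  shows "(\<Sum>w\<in>B. (gate_mass x B w)\<^sup>2) = (\<Sum>u\<in>V. \<Sum>v\<in>V. if gate B v = gate B u then x u * x v else 0)"
proof -
  have "(\<Sum>u\<in>V. \<Sum>v\<in>V. if gate B v = gate B u then x u * x v else 0)
      = (\<Sum>u\<in>V. x u * gate_mass x B (gate B u))"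
    unfolding gate_mass_def using finite_V
    by (simp add: sum_distrib_left sum.inter_filter if_distrib[of "\<lambda>s. x _ * s"] cong: if_cong)
  also have "\<dots> = (\<Sum>w\<in>B. \<Sum>u\<in>{u \<in> V. gate B u = w}. x u * gate_mass x B (gate B u))"
    using finite_V finite_block[OF B] gate_in_block[OF B] by (intro sum.group[symmetric]) auto
  also have "\<dots> = (\<Sum>w\<in>B. (gate_mass x B w)\<^sup>2)"
    unfolding power2_eq_square by (simp add: gate_mass_def sum_distrib_right)
  finally show ?thesis ..
qed

lemma dist_quadratic_form:
  "(\<Sum>u\<in>V. x u * (\<Sum>v\<in>V. real (d u v) * x v))
     = (\<Sum>B\<in>blocks V E. (\<Sum>v\<in>V. x v)\<^sup>2 - (\<Sum>w\<in>B. (gate_mass x B w)\<^sup>2))"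
proof -
  let ?P = "\<lambda>B u v. if gate B v = gate B u then x u * x v else 0"
  have "x u * (real (d u v) * x v) = (\<Sum>B\<in>blocks V E. x u * x v - ?P B u v)"
    if "u \<in> V" "v \<in> V" for u v
  proof -
    have "real (d u v) = (\<Sum>B\<in>blocks V E. if gate B v = gate B u then 0 else 1)"
      using dist_eq_card_separating_blocks[OF that] finite_blocks
      by (simp add: sum.If_cases Int_def eq_commute)
    then have "x u * (real (d u v) * x v) = (\<Sum>B\<in>blocks V E. (if gate B v = gate B u then 0 else 1) * (x u * x v))"
      by (simp add: sum_distrib_right[symmetric])
    also have "\<dots> = (\<Sum>B\<in>blocks V E. x u * x v - ?P B u v)" by (rule sum.cong) auto
    finally show ?thesis .
  qed
  then have "(\<Sum>u\<in>V. x u * (\<Sum>v\<in>V. real (d u v) * x v))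
      = (\<Sum>u\<in>V. \<Sum>v\<in>V. \<Sum>B\<in>blocks V E. x u * x v - ?P B u v)"
    by (simp add: sum_distrib_left)
  also have "\<dots> = (\<Sum>B\<in>blocks V E. \<Sum>u\<in>V. \<Sum>v\<in>V. x u * x v - ?P B u v)"
    by (subst sum.swap) (simp only: sum.swap[of _ V "blocks V E"])
  also have "\<dots> = (\<Sum>B\<in>blocks V E. (\<Sum>v\<in>V. x v)\<^sup>2 - (\<Sum>w\<in>B. (gate_mass x B w)\<^sup>2))"
  proof (rule sum.cong[OF refl])
    fix B assume B: "B \<in> blocks V E"
    have "(\<Sum>v\<in>V. x v)\<^sup>2 = (\<Sum>u\<in>V. \<Sum>v\<in>V. x u * x v)"
      by (simp add: power2_eq_square sum_product)
    then show "(\<Sum>u\<in>V. \<Sum>v\<in>V. x u * x v - ?P B u v)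
        = (\<Sum>v\<in>V. x v)\<^sup>2 - (\<Sum>w\<in>B. (gate_mass x B w)\<^sup>2)"
      by (simp add: sum_gate_mass_square[OF B] sum_subtractf)
  qed
  finally show ?thesis .
qed

lemma sum_gate_neq_eq:
  "(\<Sum>u\<in>{u \<in> V. gate B u \<noteq> w}. x u) = (\<Sum>u\<in>V. x u) - gate_mass x B w"
proof -
  have "(\<Sum>u\<in>V. x u) = (\<Sum>u\<in>V. (if gate B u = w then x u else 0) + (if gate B u \<noteq> w then x u else 0))"
    by (rule sum.cong) auto
  then show ?thesis
    unfolding gate_mass_def by (simp add: sum.distrib sum.inter_filter[OF finite_V])
qed

lemma dist_kernel_sum_eq_0:
  fixes x :: "'a \<Rightarrow> real"
  assumes two: "card V \<ge> 2" and Dx: "\<forall>u\<in>V. (\<Sum>v\<in>V. real (d u v) * x v) = 0"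
  shows "(\<Sum>v\<in>V. x v) = 0"
proof -
  have "(\<Sum>v\<in>V. x v) * lambda_G V E = (\<Sum>v\<in>V. x v * (\<Sum>u\<in>V. real (d v u) * beta V E u))"
    unfolding sum_distrib_right using sum_dist_beta by (intro sum.cong) auto
  also have "\<dots> = (\<Sum>v\<in>V. \<Sum>u\<in>V. beta V E u * (real (d u v) * x v))"
  proof (intro sum.cong refl)
    fix v assume v: "v \<in> V"
    have "x v * (real (d v u) * beta V E u) = beta V E u * (real (d u v) * x v)" if "u \<in> V" for u
      using dist_sym[OF that v] by simp
    then show "x v * (\<Sum>u\<in>V. real (d v u) * beta V E u) = (\<Sum>u\<in>V. beta V E u * (real (d u v) * x v))"
      unfolding sum_distrib_left by (intro sum.cong) auto
  qed
  also have "\<dots> = (\<Sum>u\<in>V. beta V E u * (\<Sum>v\<in>V. real (d u v) * x v))"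
    by (subst sum.swap) (simp add: sum_distrib_left)
  also have "\<dots> = 0" using Dx by simp
  finally show ?thesis using lambda_G_pos[OF two] by simp
qed

lemma dist_kernel_trivial:
  fixes x :: "'a \<Rightarrow> real"
  assumes two: "card V \<ge> 2" and Dx: "\<forall>u\<in>V. (\<Sum>v\<in>V. real (d u v) * x v) = 0" and v: "v \<in> V"
  shows "x v = 0"
proof -
  have sum0: "(\<Sum>v\<in>V. x v) = 0" by (rule dist_kernel_sum_eq_0[OF two Dx])
  have "(\<Sum>B\<in>blocks V E. (\<Sum>v\<in>V. x v)\<^sup>2 - (\<Sum>w\<in>B. (gate_mass x B w)\<^sup>2)) = 0"
    using dist_quadratic_form[of x] Dx by simp
  then have "(\<Sum>B\<in>blocks V E. \<Sum>w\<in>B. (gate_mass x B w)\<^sup>2) = 0"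
    using sum0 by (simp add: sum_negf)
  then have "\<forall>B\<in>blocks V E. \<forall>w\<in>B. gate_mass x B w = 0"
    using finite_blocks finite_block by (simp add: sum_nonneg sum_nonneg_eq_0_iff)
  then have "(\<Sum>u\<in>{u \<in> V. gate B u \<noteq> v}. x u) = 0" if "B \<in> blocks V E" "v \<in> B" for B
    using that sum0 by (simp add: sum_gate_neq_eq)
  then show ?thesis using sum_V_by_blocks_containing[OF v, of x] sum0 by simp
qed

lemma curv_solutions_eq:
  assumes two: "card V \<ge> 2"
  shows "curv_solutions V E = {restrict (\<lambda>v. real (card V) * beta V E v / lambda_G V E) V}"
    (is "_ = {?K}")
proof -
  have sol: "curv_eq V E ?K"
    unfolding curv_eq_def dmat_def
  proof
    fix u assume u: "u \<in> V"
    have "(\<Sum>v\<in>V. real (d u v) * ?K v)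
        = real (card V) / lambda_G V E * (\<Sum>v\<in>V. real (d u v) * beta V E v)"
      unfolding sum_distrib_left by (intro sum.cong) auto
    also have "\<dots> = real (card V)" using sum_dist_beta[OF u] lambda_G_pos[OF two] by simp
    finally show "(\<Sum>v\<in>V. real (d u v) * ?K v) = real (card V)" .
  qed
  have "K = ?K" if K: "K \<in> extensional V" "curv_eq V E K" for K
  proof (rule extensionalityI[OF K(1)])
    have Dx: "\<forall>u\<in>V. (\<Sum>v\<in>V. real (d u v) * (K v - ?K v)) = 0"
      using K(2) sol unfolding curv_eq_def dmat_def by (simp add: right_diff_distrib sum_subtractf)
    show "K v = ?K v" if "v \<in> V" for v
      using dist_kernel_trivial[OF two Dx that] by simp
  qed simp
  then show ?thesis using sol unfolding curv_solutions_def by auto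
qed

end

theorem mainTheorem1:
  fixes V :: "'a set" and E :: "'a \<Rightarrow> 'a \<Rightarrow> bool"
  assumes "block_graph V E"
    and "card V \<ge> 2"
  shows "(\<exists>!K. K \<in> extensional V \<and> curv_eq V E K)
    \<and> (\<forall>x\<in>V. steinerberger_curvature V E x = real (card V) * beta V E x / lambda_G V E)"
proof -
  interpret clique_block_graph V E
    using assms(1) unfolding block_graph_def by unfold_locales auto
  define K where "K = restrict (\<lambda>v. real (card V) * beta V E v / lambda_G V E) V"
  have solutions: "curv_solutions V E = {K}"
    unfolding K_def by (rule curv_solutions_eq[OF assms(2)])
  then have "steinerberger_curvature V E = K"
    unfolding steinerberger_curvature_def by simp
  moreover have "\<exists>!K. K \<in> extensional V \<and> curv_eq V E K"
    using solutions unfolding curv_solutions_def by (metis (mono_tags, lifting) mem_Collect_eq singleton_iff)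
  ultimately show ?thesis unfolding K_def by simp
qed

end
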